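(* Let $\omega:\Gamma\times\Gamma\to\Gamma$ be a group morphism. There is a subgroup $\Gamma_\omega\le\Gamma$ such that $\omega$ restricts to a surjective group morphism $\omega_{\mathrm{res}}:\Gamma_\omega\times\Gamma_\omega\to\Gamma_\omega$ and $G(\omega)\cong G(\omega_{\mathrm{res}})$.
   Context: $\{0,1\}^*$ denotes the finite words over $\{0,1\}$; $\mathfrak C=\{0,1\}^{\mathbb N}$. A finite complete prefix code is a finite set $\{t_1,\dots,t_n\}\subset\{0,1\}^*$ such that every $x\in\mathfrak C$ has exactly one $t_i$ as prefix. Thompson's group $V$ is the group of homeomorphisms $v$ of $\mathfrak C$ for which there exist finite complete prefix codes $\{t_i\},\{s_i\}$ and a permutation $\sigma$ with $v(t_iw)=s_{\sigma(i)}w$. For a group morphism $\omega:\Gamma^2\to\Gamma$, $K(\omega)$ is the group of maps $a:\{0,1\}^*\to\Gamma$ (pointwise product) with $a(u)=\omega(a(u0),a(u1))$ for all $u$; $V$ acts on it by $\pi(v)(a)(s_{\sigma(i)}u)=a(t_iu)$ for all $i$, $u$ (determining $\pi(v)(a)\in K(\omega)$ uniquely); $G(\omega):=K(\omega)\rtimes V$ with $vav^{-1}=\pi(v)(a)$. *)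

theory Defs
  imports "HOL-Analysis.Analysis" "HOL-Algebra.Algebra"
begin

definition prep :: "bool list \<Rightarrow> (nat \<Rightarrow> bool) \<Rightarrow> (nat \<Rightarrow> bool)" where
  "prep t x = (\<lambda>k. if k < length t then t ! k else x (k - length t))"

definition is_prefix_of_seq :: "bool list \<Rightarrow> (nat \<Rightarrow> bool) \<Rightarrow> bool" where
  "is_prefix_of_seq t x \<longleftrightarrow> (\<forall>k < length t. x k = t ! k)"

definition complete_prefix_code :: "bool list set \<Rightarrow> bool" where
  "complete_prefix_code T \<longleftrightarrow> finite T \<and> (\<forall>x. \<exists>!t. t \<in> T \<and> is_prefix_of_seq t x)"

definition cantor_top :: "(nat \<Rightarrow> bool) topology" where
  "cantor_top = product_topology (\<lambda>_. discrete_topology UNIV) UNIV"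

definition represents ::
  "bool list list \<Rightarrow> bool list list \<Rightarrow> (nat \<Rightarrow> nat) \<Rightarrow> ((nat \<Rightarrow> bool) \<Rightarrow> (nat \<Rightarrow> bool)) \<Rightarrow> bool" where
  "represents ts ss \<sigma> v \<longleftrightarrow>
     length ts = length ss \<and> distinct ts \<and> distinct ss \<and>
     complete_prefix_code (set ts) \<and> complete_prefix_code (set ss) \<and>
     \<sigma> permutes {0..<length ts} \<and>
     (\<forall>i < length ts. \<forall>w. v (prep (ts ! i) w) = prep (ss ! \<sigma> i) w)"

definition thompsonV_set :: "((nat \<Rightarrow> bool) \<Rightarrow> (nat \<Rightarrow> bool)) set" where
  "thompsonV_set = {v. homeomorphic_map cantor_top cantor_top v \<and>
                        (\<exists>ts ss \<sigma>. represents ts ss \<sigma> v)}"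

definition thompsonV :: "((nat \<Rightarrow> bool) \<Rightarrow> (nat \<Rightarrow> bool)) monoid" where
  "thompsonV = \<lparr>carrier = thompsonV_set, mult = (\<lambda>v w. v \<circ> w), one = id\<rparr>"

definition K_set :: "'g monoid \<Rightarrow> ('g \<times> 'g \<Rightarrow> 'g) \<Rightarrow> (bool list \<Rightarrow> 'g) set" where
  "K_set \<Gamma> \<omega> = {a. (\<forall>u. a u \<in> carrier \<Gamma>) \<and>
                      (\<forall>u. a u = \<omega> (a (u @ [False]), a (u @ [True])))}"

definition K_grp :: "'g monoid \<Rightarrow> ('g \<times> 'g \<Rightarrow> 'g) \<Rightarrow> (bool list \<Rightarrow> 'g) monoid" where
  "K_grp \<Gamma> \<omega> = \<lparr>carrier = K_set \<Gamma> \<omega>,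
                  mult = (\<lambda>a b. \<lambda>u. a u \<otimes>\<^bsub>\<Gamma>\<^esub> b u),
                  one = (\<lambda>u. \<one>\<^bsub>\<Gamma>\<^esub>)\<rparr>"

definition piV :: "'g monoid \<Rightarrow> ('g \<times> 'g \<Rightarrow> 'g) \<Rightarrow> ((nat \<Rightarrow> bool) \<Rightarrow> (nat \<Rightarrow> bool))
                    \<Rightarrow> (bool list \<Rightarrow> 'g) \<Rightarrow> (bool list \<Rightarrow> 'g)" where
  "piV \<Gamma> \<omega> v a = (THE b. b \<in> K_set \<Gamma> \<omega> \<and>
      (\<exists>ts ss \<sigma>. represents ts ss \<sigma> v \<and>
         (\<forall>i < length ts. \<forall>u. b (ss ! \<sigma> i @ u) = a (ts ! i @ u))))"

text \<open>G(omega) = K(omega) semidirect V, with v a v^-1 = pi(v)(a), i.e.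
  (a,v)(b,w) = (a pi(v)(b), v w).\<close>
definition G_grp :: "'g monoid \<Rightarrow> ('g \<times> 'g \<Rightarrow> 'g)
      \<Rightarrow> ((bool list \<Rightarrow> 'g) \<times> ((nat \<Rightarrow> bool) \<Rightarrow> (nat \<Rightarrow> bool))) monoid" where
  "G_grp \<Gamma> \<omega> = \<lparr>carrier = K_set \<Gamma> \<omega> \<times> thompsonV_set,
     mult = (\<lambda>(a, v) (b, w). (\<lambda>u. a u \<otimes>\<^bsub>\<Gamma>\<^esub> piV \<Gamma> \<omega> v b u, v \<circ> w)),
     one = (\<lambda>u. \<one>\<^bsub>\<Gamma>\<^esub>, id)\<rparr>"

end

theory Submission
  imports Defs
begin

text \<open>Take \<open>\<Gamma>\<^sub>\<omega>\<close> to be the set of values \<open>a []\<close> at the root of the elements \<open>a\<close> of \<open>K(\<omega>)\<close>.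
  Since subtrees of elements of \<open>K(\<omega>)\<close> are again in \<open>K(\<omega>)\<close>, every element of \<open>K(\<omega>)\<close> takes
  all its values in \<open>\<Gamma>\<^sub>\<omega>\<close>; as \<open>K(\<omega>)\<close> is a group, \<open>\<Gamma>\<^sub>\<omega>\<close> is a subgroup. It is mapped onto itself
  by \<omega>: \<open>a [] = \<omega> (a [False], a [True])\<close> gives surjectivity, and grafting two elements of
  \<open>K(\<omega>)\<close> below a new root gives closure. Hence \<open>K(\<omega>\<^sub>r\<^sub>e\<^sub>s) = K(\<omega>)\<close> as sets of maps, and
  \<open>G(\<omega>\<^sub>r\<^sub>e\<^sub>s)\<close> and \<open>G(\<omega>)\<close> are literally the same group.\<close>

lemma K_set_iff:
  "a \<in> K_set \<Gamma> \<omega> \<longleftrightarrow>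
     (\<forall>u. a u \<in> carrier \<Gamma>) \<and> (\<forall>u. a u = \<omega> (a (u @ [False]), a (u @ [True])))"
  by (simp add: K_set_def)

lemma K_set_suffix:
  assumes "a \<in> K_set \<Gamma> \<omega>"
  shows "(\<lambda>w. a (u @ w)) \<in> K_set \<Gamma> \<omega>"
  using assms unfolding K_set_iff by (metis append_assoc)

lemma K_set_graft:
  assumes a: "a \<in> K_set \<Gamma> \<omega>" and b: "b \<in> K_set \<Gamma> \<omega>"
    and root: "\<omega> (a [], b []) \<in> carrier \<Gamma>"
  shows "(\<lambda>w. case w of [] \<Rightarrow> \<omega> (a [], b []) | x # v \<Rightarrow> if x then b v else a v) \<in> K_set \<Gamma> \<omega>"
    (is "?c \<in> _")
proof -
  from a have a_carrier: "\<forall>u. a u \<in> carrier \<Gamma>"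
    and a_eq: "\<And>u. a u = \<omega> (a (u @ [False]), a (u @ [True]))"
    unfolding K_set_iff by blast+
  from b have b_carrier: "\<forall>u. b u \<in> carrier \<Gamma>"
    and b_eq: "\<And>u. b u = \<omega> (b (u @ [False]), b (u @ [True]))"
    unfolding K_set_iff by blast+
  have "?c w \<in> carrier \<Gamma>" for w
    using a_carrier b_carrier root by (cases w) auto
  moreover have "?c w = \<omega> (?c (w @ [False]), ?c (w @ [True]))" for w
  proof (cases w)
    case (Cons x v)
    then show ?thesis
      using a_eq[of v] b_eq[of v] by simp
  qed simp
  ultimately show ?thesis
    unfolding K_set_iff by blast
qed

lemma K_set_restrict_carrier:
  assumes "H \<subseteq> carrier \<Gamma>"
  shows "K_set (\<Gamma>\<lparr>carrier := H\<rparr>) \<omega> = {a \<in> K_set \<Gamma> \<omega>. \<forall>u. a u \<in> H}"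
  using assms by (simp add: set_eq_iff K_set_iff) blast

lemma G_grp_eqI:
  assumes "K_set \<Gamma>' \<omega> = K_set \<Gamma> \<omega>" and "mult \<Gamma>' = mult \<Gamma>" and "one \<Gamma>' = one \<Gamma>"
  shows "G_grp \<Gamma>' \<omega> = G_grp \<Gamma> \<omega>"
  unfolding G_grp_def piV_def assms ..

lemma hom_DirProd_restrict:
  assumes "\<omega> \<in> hom (\<Gamma> \<times>\<times> \<Gamma>) \<Gamma>" and "H \<subseteq> carrier \<Gamma>" and "\<omega> ` (H \<times> H) \<subseteq> H"
  shows "\<omega> \<in> hom (\<Gamma>\<lparr>carrier := H\<rparr> \<times>\<times> \<Gamma>\<lparr>carrier := H\<rparr>) (\<Gamma>\<lparr>carrier := H\<rparr>)"
proof (rule homI)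
  fix x assume "x \<in> carrier (\<Gamma>\<lparr>carrier := H\<rparr> \<times>\<times> \<Gamma>\<lparr>carrier := H\<rparr>)"
  then show "\<omega> x \<in> carrier (\<Gamma>\<lparr>carrier := H\<rparr>)"
    using assms(3) by auto
next
  fix x y assume "x \<in> carrier (\<Gamma>\<lparr>carrier := H\<rparr> \<times>\<times> \<Gamma>\<lparr>carrier := H\<rparr>)"
    and "y \<in> carrier (\<Gamma>\<lparr>carrier := H\<rparr> \<times>\<times> \<Gamma>\<lparr>carrier := H\<rparr>)"
  then have "x \<in> carrier (\<Gamma> \<times>\<times> \<Gamma>)" and "y \<in> carrier (\<Gamma> \<times>\<times> \<Gamma>)"
    using assms(2) by auto
  then show "\<omega> (x \<otimes>\<^bsub>\<Gamma>\<lparr>carrier := H\<rparr> \<times>\<times> \<Gamma>\<lparr>carrier := H\<rparr>\<^esub> y) = \<omega> x \<otimes>\<^bsub>\<Gamma>\<lparr>carrier := H\<rparr>\<^esub> \<omega> y"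
    using hom_mult[OF assms(1)] by (simp add: mult_DirProd')
qed

context
  fixes \<Gamma> :: "'g monoid" (structure) and \<omega> :: "'g \<times> 'g \<Rightarrow> 'g"
  assumes group: "group \<Gamma>" and hom: "\<omega> \<in> hom (\<Gamma> \<times>\<times> \<Gamma>) \<Gamma>"
begin

interpretation group \<Gamma>
  by (rule group)

interpretation \<omega>: group_hom "\<Gamma> \<times>\<times> \<Gamma>" \<Gamma> \<omega>
  by (simp add: group_hom_def group_hom_axioms_def group hom DirProd_group)

lemma hom_pair_closed: "x \<in> carrier \<Gamma> \<Longrightarrow> y \<in> carrier \<Gamma> \<Longrightarrow> \<omega> (x, y) \<in> carrier \<Gamma>"
  using \<omega>.hom_closed[of "(x, y)"] by simp

lemma hom_pair_mult:
  assumes "x \<in> carrier \<Gamma>" "y \<in> carrier \<Gamma>" "x' \<in> carrier \<Gamma>" "y' \<in> carrier \<Gamma>"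
  shows "\<omega> (x \<otimes> x', y \<otimes> y') = \<omega> (x, y) \<otimes> \<omega> (x', y')"
  using assms \<omega>.hom_mult[of "(x, y)" "(x', y')"] by simp

lemma hom_pair_inv:
  assumes "x \<in> carrier \<Gamma>" "y \<in> carrier \<Gamma>"
  shows "\<omega> (inv x, inv y) = inv \<omega> (x, y)"
  using assms \<omega>.hom_inv[of "(x, y)"] by (simp add: group)

lemma K_set_one: "(\<lambda>u. \<one>) \<in> K_set \<Gamma> \<omega>"
  using \<omega>.hom_one by (simp add: K_set_iff)

lemma K_set_mult:
  assumes a: "a \<in> K_set \<Gamma> \<omega>" and b: "b \<in> K_set \<Gamma> \<omega>"
  shows "(\<lambda>u. a u \<otimes> b u) \<in> K_set \<Gamma> \<omega>"
proof -
  from a have a_carrier: "\<And>u. a u \<in> carrier \<Gamma>"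
    and a_eq: "\<And>u. a u = \<omega> (a (u @ [False]), a (u @ [True]))"
    unfolding K_set_iff by blast+
  from b have b_carrier: "\<And>u. b u \<in> carrier \<Gamma>"
    and b_eq: "\<And>u. b u = \<omega> (b (u @ [False]), b (u @ [True]))"
    unfolding K_set_iff by blast+
  have "a u \<otimes> b u = \<omega> (a (u @ [False]) \<otimes> b (u @ [False]), a (u @ [True]) \<otimes> b (u @ [True]))"
    for u
    using a_eq[of u] b_eq[of u] by (simp add: hom_pair_mult a_carrier b_carrier)
  then show ?thesis
    unfolding K_set_iff using a_carrier b_carrier by blast
qed

lemma K_set_inv:
  assumes a: "a \<in> K_set \<Gamma> \<omega>"
  shows "(\<lambda>u. inv a u) \<in> K_set \<Gamma> \<omega>"
proof -
  from a have a_carrier: "\<And>u. a u \<in> carrier \<Gamma>"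
    and a_eq: "\<And>u. a u = \<omega> (a (u @ [False]), a (u @ [True]))"
    unfolding K_set_iff by blast+
  have "inv a u = \<omega> (inv a (u @ [False]), inv a (u @ [True]))" for u
    using a_eq[of u] by (simp add: hom_pair_inv a_carrier)
  then show ?thesis
    unfolding K_set_iff using a_carrier by blast
qed

definition root_values :: "'g set" where
  "root_values = (\<lambda>a. a []) ` K_set \<Gamma> \<omega>"

lemma root_values_subset: "root_values \<subseteq> carrier \<Gamma>"
  unfolding root_values_def K_set_def by blast

lemma K_set_value_in_root_values:
  assumes "a \<in> K_set \<Gamma> \<omega>"
  shows "a u \<in> root_values"
  unfolding root_values_def by (rule image_eqI[OF _ K_set_suffix[OF assms, of u]]) simp

lemma subgroup_root_values: "subgroup root_values \<Gamma>"
proof (rule subgroupI)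
  show "root_values \<subseteq> carrier \<Gamma>"
    by (rule root_values_subset)
  show "root_values \<noteq> {}"
    unfolding root_values_def using K_set_one by blast
next
  fix h assume "h \<in> root_values"
  then obtain a where a: "a \<in> K_set \<Gamma> \<omega>" and "h = a []"
    unfolding root_values_def by blast
  then show "inv h \<in> root_values"
    unfolding root_values_def by (intro image_eqI[OF _ K_set_inv[OF a]]) simp
next
  fix h g assume "h \<in> root_values" and "g \<in> root_values"
  then obtain a b where a: "a \<in> K_set \<Gamma> \<omega>" and b: "b \<in> K_set \<Gamma> \<omega>"
    and "h = a []" and "g = b []"
    unfolding root_values_def by blast
  then show "h \<otimes> g \<in> root_values"
    unfolding root_values_def by (intro image_eqI[OF _ K_set_mult[OF a b]]) simp
qed

lemma image_root_values: "\<omega> ` (root_values \<times> root_values) = root_values"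
proof
  show "\<omega> ` (root_values \<times> root_values) \<subseteq> root_values"
  proof clarify
    fix h g assume "h \<in> root_values" and "g \<in> root_values"
    then obtain a b where a: "a \<in> K_set \<Gamma> \<omega>" and b: "b \<in> K_set \<Gamma> \<omega>"
      and "h = a []" and "g = b []"
      unfolding root_values_def by blast
    moreover from a b have root: "\<omega> (a [], b []) \<in> carrier \<Gamma>"
      unfolding K_set_iff by (blast intro: hom_pair_closed)
    have "\<omega> (a [], b []) \<in> root_values"
      unfolding root_values_def by (rule image_eqI[OF _ K_set_graft[OF a b root]]) simp
    ultimately show "\<omega> (h, g) \<in> root_values"
      by simp
  qed
  show "root_values \<subseteq> \<omega> ` (root_values \<times> root_values)"
  proof
    fix h assume "h \<in> root_values"
    then obtain a where a: "a \<in> K_set \<Gamma> \<omega>" and "h = a []"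
      unfolding root_values_def by blast
    then have "h = \<omega> (a [False], a [True])"
      unfolding K_set_iff by (metis append_Nil)
    with K_set_value_in_root_values[OF a] show "h \<in> \<omega> ` (root_values \<times> root_values)"
      by blast
  qed
qed

lemma K_set_root_values: "K_set (\<Gamma>\<lparr>carrier := root_values\<rparr>) \<omega> = K_set \<Gamma> \<omega>"
  unfolding K_set_restrict_carrier[OF root_values_subset]
  using K_set_value_in_root_values by blast

end

theorem mainTheorem16:
  fixes \<Gamma> :: "'g monoid" and \<omega> :: "'g \<times> 'g \<Rightarrow> 'g"
  assumes "group \<Gamma>" and "\<omega> \<in> hom (\<Gamma> \<times>\<times> \<Gamma>) \<Gamma>"
  shows "\<exists>H. subgroup H \<Gamma> \<and>
             \<omega> \<in> hom (\<Gamma>\<lparr>carrier := H\<rparr> \<times>\<times> \<Gamma>\<lparr>carrier := H\<rparr>) (\<Gamma>\<lparr>carrier := H\<rparr>) \<and>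
             \<omega> ` (H \<times> H) = H \<and>
             G_grp \<Gamma> \<omega> \<cong> G_grp (\<Gamma>\<lparr>carrier := H\<rparr>) \<omega>"
proof (intro exI conjI)
  let ?H = "root_values \<Gamma> \<omega>"
  show "subgroup ?H \<Gamma>"
    using subgroup_root_values[OF assms] .
  show image: "\<omega> ` (?H \<times> ?H) = ?H"
    using image_root_values[OF assms] .
  show "\<omega> \<in> hom (\<Gamma>\<lparr>carrier := ?H\<rparr> \<times>\<times> \<Gamma>\<lparr>carrier := ?H\<rparr>) (\<Gamma>\<lparr>carrier := ?H\<rparr>)"
    using hom_DirProd_restrict[OF assms(2) root_values_subset[OF assms] equalityD1[OF image]] .
  have "G_grp (\<Gamma>\<lparr>carrier := ?H\<rparr>) \<omega> = G_grp \<Gamma> \<omega>"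
    by (rule G_grp_eqI) (simp_all add: K_set_root_values assms)
  then show "G_grp \<Gamma> \<omega> \<cong> G_grp (\<Gamma>\<lparr>carrier := ?H\<rparr>) \<omega>"
    by (simp add: iso_refl)
qed

end
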